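(* Let $X\subseteq\Omega$ be club in $\Omega$ with $0\notin X$, $\Theta=\Theta_X$. Let $\alpha=\Omega\tilde\alpha$ (a multiple of $\Omega$) and $\beta<\Omega$. If $\alpha+\beta\in\hat\varepsilon_{\Omega+1}$, $\alpha+\beta$ is a limit ordinal, $\alpha+\beta\notin\mathrm{FIX}(X)$, and $(\beta_n)_{n<\omega}$ is a strictly increasing sequence with supremum $\beta$, then $(\Theta(\alpha+\beta_n))_{n<\omega}$ is strictly increasing with supremum $\Theta(\alpha+\beta)$.
   Context: $\Omega$ is the first uncountable ordinal; $\varepsilon_{\Omega+1}$ the least $\varepsilon>\Omega$ with $\omega^\varepsilon=\varepsilon$. Every $0<\xi<\varepsilon_{\Omega+1}$ has a unique $\Omega$-normal form $\xi=\Omega^{\alpha}\beta+\gamma$ with $0<\beta<\Omega$, $\gamma<\Omega^{\alpha}$. $C(0)=\{0\}$, $C(\Omega^\alpha\beta+\gamma)=C(\alpha)\cup C(\gamma)\cup\{\beta\}$; $\xi^*=\max C(\xi)$. For $\theta<\Omega$: $0[\theta]=1[\theta]=0$; $(\Omega^\alpha\beta+\gamma)[\theta]=\Omega^\alpha\beta+\gamma[\theta]$ if $\gamma>0$; $(\Omega^\alpha\beta)[\theta]=\Omega^\alpha\theta$ if $\beta$ is a limit; $\Omega^{\alpha+1}[\theta]=\Omega^\alpha\theta$; $(\Omega^\alpha(\beta+1))[\theta]=\Omega^\alpha\beta+(\Omega^\alpha)[\theta]$ if $\beta>0$; $\Omega^\alpha[\theta]=\Omega^{\alpha[\theta]}$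 if $\alpha$ is a limit. $\tau(0)=0$, $\tau(\zeta+1)=1$, $\tau(\Omega^\alpha\beta+\gamma)=\tau(\gamma)$ if $\gamma>0$, $\tau(\Omega^\alpha\beta)=\beta$ if $\beta$ limit, $\tau(\Omega^\alpha(\beta+1))=\tau(\alpha)$ if $\alpha$ limit, $\tau(\Omega^{\alpha+1}(\beta+1))=\Omega$. $\Theta_X(\xi)$ is the least $\theta\in X$ with $\theta>\xi^*$ such that all $\zeta<\xi$ with $\zeta^*<\theta$ have $\Theta_X(\zeta)<\theta$. $\Omega_0=1$, $\Omega_{n+1}=\Omega^{\Omega_n}$, $\Theta_X(\varepsilon_{\Omega+1})=\sup_n\Theta_X(\Omega_n)$, $\hat\varepsilon_{\Omega+1}=\{\xi<\varepsilon_{\Omega+1}:\xi^*<\Theta_X(\varepsilon_{\Omega+1})\}$. $\mathrm{FIX}(X)$ is the set of $\xi<\varepsilon_{\Omega+1}$ with $(\xi[1])^*<\xi^*=\tau(\xi)=\Theta_X(\gamma)$ for some $\gamma>\xi$. *)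

theory Defs
  imports Main "HOL-Library.Countable_Set"
begin

text \<open>The countable ordinals (the elements of Omega) are modelled by an arbitrary
well-ordered type 'w which is uncountable but all of whose proper initial segments
are countable (these assumptions appear in the theorem); any such well-order has
order type omega_1.\<close>

definition w0 :: "'w::wellorder" where "w0 = (LEAST x. True)"
definition wsuc :: "'w::wellorder \<Rightarrow> 'w" where "wsuc x = (LEAST y. x < y)"
definition w1 :: "'w::wellorder" where "w1 = wsuc w0"
definition wis_succ :: "'w::wellorder \<Rightarrow> bool" where "wis_succ x = (\<exists>y. x = wsuc y)"
definition wpred :: "'w::wellorder \<Rightarrow> 'w" where "wpred x = (THE y. x = wsuc y)"
definition wlim :: "'w::wellorder \<Rightarrow> bool" where "wlim x = (x \<noteq> w0 \<and> \<not> wis_succ x)"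

definition club :: "'w::wellorder set \<Rightarrow> bool" where
  "club X = ((\<forall>a. \<exists>x\<in>X. a < x) \<and>
             (\<forall>l. l \<noteq> w0 \<and> (\<forall>g<l. \<exists>x\<in>X. g < x \<and> x < l) \<longrightarrow> l \<in> X))"

text \<open>Plus a b c denotes Omega^a * b + c.\<close>
datatype 'w tm = Z | Plus "'w tm" 'w "'w tm"

fun tless :: "'w::linorder tm \<Rightarrow> 'w tm \<Rightarrow> bool" where
  "tless Z Z = False"
| "tless Z (Plus _ _ _) = True"
| "tless (Plus _ _ _) Z = False"
| "tless (Plus a b c) (Plus a' b' c') =
     (tless a a' \<or> (a = a' \<and> (b < b' \<or> (b = b' \<and> tless c c'))))"

text \<open>Normal form: 0 < b < Omega and c < Omega^a.\<close>
fun nf :: "'w::wellorder tm \<Rightarrow> bool" where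
  "nf Z = True"
| "nf (Plus a b c) = (nf a \<and> nf c \<and> b \<noteq> w0 \<and>
     (case c of Z \<Rightarrow> True | Plus a' _ _ \<Rightarrow> tless a' a))"

text \<open>Omega^a * t for t < Omega.\<close>
definition mk :: "'w::wellorder tm \<Rightarrow> 'w \<Rightarrow> 'w tm" where
  "mk a t = (if t = w0 then Z else Plus a t Z)"

fun tsuc :: "'w::wellorder tm \<Rightarrow> 'w tm" where
  "tsuc Z = Plus Z w1 Z"
| "tsuc (Plus a b c) = (if c = Z then (if a = Z then Plus Z (wsuc b) Z else Plus a b (Plus Z w1 Z))
                        else Plus a b (tsuc c))"

definition tis_succ :: "'w::wellorder tm \<Rightarrow> bool" where
  "tis_succ x = (\<exists>z. nf z \<and> x = tsuc z)"
definition tpred :: "'w::wellorder tm \<Rightarrow> 'w tm" where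
  "tpred x = (THE z. nf z \<and> x = tsuc z)"
definition tlim :: "'w::wellorder tm \<Rightarrow> bool" where
  "tlim x = (x \<noteq> Z \<and> \<not> tis_succ x)"

text \<open>Ordinal addition alpha + beta for beta < Omega, alpha a multiple of Omega.\<close>
fun omega_mult :: "'w::wellorder tm \<Rightarrow> bool" where
  "omega_mult Z = True"
| "omega_mult (Plus a b c) = (if c = Z then a \<noteq> Z else omega_mult c)"

fun addc :: "'w::wellorder tm \<Rightarrow> 'w \<Rightarrow> 'w tm" where
  "addc Z t = mk Z t"
| "addc (Plus a b c) t = Plus a b (addc c t)"

fun Cset :: "'w::wellorder tm \<Rightarrow> 'w set" where
  "Cset Z = {w0}"
| "Cset (Plus a b c) = Cset a \<union> Cset c \<union> {b}"

definition star :: "'w::wellorder tm \<Rightarrow> 'w" where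
  "star x = Max (Cset x)"

text \<open>fs x t is x[t].  In the case Omega^a (the coefficient is 1) the rules
  1[t] = 0, Omega^(a+1)[t] = Omega^a t and Omega^a[t] = Omega^(a[t]) (a limit) are
  applied; the rule for Omega^a (b+1), b > 0, is Omega^a b + (Omega^a)[t].\<close>
fun fs :: "'w::wellorder tm \<Rightarrow> 'w \<Rightarrow> 'w tm" where
  "fs Z t = Z"
| "fs (Plus a b c) t =
    (let pw = (if a = Z then Z else if tis_succ a then mk (tpred a) t else Plus (fs a t) w1 Z)
     in if c \<noteq> Z then Plus a b (fs c t)
        else if wlim b then mk a t
        else if b = w1 then pw
        else Plus a (wpred b) pw)"

text \<open>tau with values in Omega + 1; None represents Omega.\<close>
fun tau :: "'w::wellorder tm \<Rightarrow> 'w option" where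
  "tau Z = Some w0"
| "tau (Plus a b c) =
    (if c \<noteq> Z then tau c
     else if wlim b then Some b
     else if a = Z then Some w1
     else if tis_succ a then None
     else tau a)"

definition tlessR :: "('w::wellorder tm \<times> 'w tm) set" where
  "tlessR = {(z, x). nf z \<and> nf x \<and> tless z x}"

definition ThetaF :: "'w::wellorder set \<Rightarrow> ('w tm \<Rightarrow> 'w) \<Rightarrow> 'w tm \<Rightarrow> 'w" where
  "ThetaF X f x = (LEAST t. t \<in> X \<and> star x < t \<and>
       (\<forall>z. nf z \<and> tless z x \<and> star z < t \<longrightarrow> f z < t))"

definition Theta :: "'w::wellorder set \<Rightarrow> 'w tm \<Rightarrow> 'w" where
  "Theta X = wfrec tlessR (ThetaF X)"

fun OmN :: "nat \<Rightarrow> 'w::wellorder tm" where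
  "OmN 0 = Plus Z w1 Z"
| "OmN (Suc n) = Plus (OmN n) w1 Z"

definition Theta_eps :: "'w::wellorder set \<Rightarrow> 'w" where
  "Theta_eps X = (LEAST t. \<forall>n. Theta X (OmN n) \<le> t)"

definition eps_hat :: "'w::wellorder set \<Rightarrow> 'w tm set" where
  "eps_hat X = {x. nf x \<and> star x < Theta_eps X}"

definition FIX :: "'w::wellorder set \<Rightarrow> 'w tm set" where
  "FIX X = {x. nf x \<and> star (fs x w1) < star x \<and> tau x = Some (star x) \<and>
                (\<exists>g. nf g \<and> tless x g \<and> Theta X g = star x)}"

end

theory Submission
  imports Defs
begin

(* Write xi_n = alpha + beta_n and x = alpha + beta. The terms xi_n increase together with
   their largest coefficients, so each Theta(xi_n) lies below the next one and below Theta(x).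
   The supremum s of the Theta(xi_n) lies in the club X and is closed under Theta below x,
   hence Theta(x) <= s as soon as x* < s. As x* = max(alpha*, beta) and beta <= s, the only
   obstruction is beta = s. Then beta is a limit in X, closed under Theta below x, and
   beta < Theta(Omega_n) for some n; the least gamma > x with gamma* < beta <= Theta(gamma)
   satisfies Theta(gamma) = beta, which puts x into FIX(X). *)

section \<open>Well-foundedness of the order on normal forms\<close>

lemma tless_Z [simp]: "\<not> tless x Z"
  by (cases x) auto

lemma tless_trans: "tless x y \<Longrightarrow> tless y z \<Longrightarrow> tless x z"
proof (induction x arbitrary: y z)
  case Z
  then show ?case by (cases y; cases z) auto
next
  case (Plus a b c)
  obtain a1 b1 c1 where y: "y = Plus a1 b1 c1" using Plus.prems by (cases y) auto
  obtain a2 b2 c2 where z: "z = Plus a2 b2 c2" using Plus.prems y by (cases z) auto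
  show ?case using Plus.prems Plus.IH(1)[of a1 a2] Plus.IH(2)[of c1 c2] y z
    by (auto dest: order.strict_trans)
qed

lemma tless_total: "x = y \<or> tless x y \<or> tless y x"
proof (induction x arbitrary: y)
  case Z
  then show ?case by (cases y) auto
next
  case (Plus a b c)
  show ?case
  proof (cases y)
    case (Plus a1 b1 c1)
    then show ?thesis using Plus.IH(1)[of a1] Plus.IH(2)[of c1] less_linear[of b b1] by auto
  qed simp
qed

lemma nf_Plus_smaller_tail:
  assumes "nf (Plus a b c)" "nf c'" "tless c' c"
  shows "nf (Plus a b c')"
proof (cases c')
  case (Plus a' b' c'')
  obtain a2 b2 c2 where c: "c = Plus a2 b2 c2" using assms(3) by (cases c) auto
  then have "tless a2 a" using assms(1) by simp
  moreover have "a' = a2 \<or> tless a' a2" using assms(3) c Plus by auto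
  ultimately show ?thesis using assms Plus by (auto intro: tless_trans)
qed (use assms in simp)

lemma acc_Z: "Z \<in> Wellfounded.acc tlessR"
  by (rule accI) (simp add: tlessR_def)

lemma acc_Plus_tail:
  assumes smaller_exp: "\<And>a' b' c'. tless a' a \<Longrightarrow> nf (Plus a' b' c') \<Longrightarrow>
      Plus a' b' c' \<in> Wellfounded.acc tlessR"
    and smaller_coeff: "\<And>b' c'. b' < b \<Longrightarrow> nf (Plus a b' c') \<Longrightarrow>
      Plus a b' c' \<in> Wellfounded.acc tlessR"
    and "c \<in> Wellfounded.acc tlessR" and "nf (Plus a b c)"
  shows "Plus a b c \<in> Wellfounded.acc tlessR"
  using assms(3,4)
proof (induction c rule: acc_induct_rule)
  case (1 c)
  show ?case
  proof (rule accI)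
    fix y assume "(y, Plus a b c) \<in> tlessR"
    then have nfy: "nf y" and lt: "tless y (Plus a b c)" by (auto simp: tlessR_def)
    show "y \<in> Wellfounded.acc tlessR"
    proof (cases y)
      case Z
      then show ?thesis using acc_Z by simp
    next
      case (Plus a' b' c')
      consider "tless a' a" | "a' = a" "b' < b" | "a' = a" "b' = b" "tless c' c"
        using lt Plus by auto
      then show ?thesis
      proof cases
        case 1
        then show ?thesis using smaller_exp nfy Plus by simp
      next
        case 2
        then show ?thesis using smaller_coeff nfy Plus by simp
      next
        case 3
        have "(c', c) \<in> tlessR" using nfy Plus 3 "1.prems" by (simp add: tlessR_def)
        moreover have "nf (Plus a b c')"
          using nf_Plus_smaller_tail "1.prems" nfy Plus 3 by simp
        ultimately show ?thesis using "1.IH" Plus 3 by simp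
      qed
    qed
  qed
qed

lemma acc_Plus:
  "a \<in> Wellfounded.acc tlessR \<Longrightarrow> nf (Plus a b c) \<Longrightarrow> Plus a b c \<in> Wellfounded.acc tlessR"
proof (induction a arbitrary: b c rule: acc_induct_rule)
  case (1 a)
  have smaller_exp: "Plus a' b' c' \<in> Wellfounded.acc tlessR"
    if "tless a' a" "nf (Plus a' b' c')" for a' b' c'
    using "1.IH"[of a' b' c'] that "1.prems" by (simp add: tlessR_def)
  show ?case
    using "1.prems"
  proof (induction b arbitrary: c rule: less_induct)
    case (less b)
    have "c \<in> Wellfounded.acc tlessR"
    proof (cases c)
      case Z
      then show ?thesis using acc_Z by simp
    next
      case (Plus a2 b2 c2)
      then show ?thesis using smaller_exp less.prems by simp
    qed
    with smaller_exp less.IH show ?case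
      using less.prems by (rule acc_Plus_tail)
  qed
qed

lemma nf_acc: "nf x \<Longrightarrow> x \<in> Wellfounded.acc tlessR"
  by (induction x) (auto intro: acc_Z acc_Plus)

lemma wf_tlessR: "wf tlessR"
proof (rule acc_wfI, intro allI)
  fix x :: "'w::wellorder tm"
  show "x \<in> Wellfounded.acc tlessR"
  proof (cases "nf x")
    case False
    show ?thesis
    proof (rule accI)
      show "y \<in> Wellfounded.acc tlessR" if "(y, x) \<in> tlessR" for y
        using that False by (simp add: tlessR_def)
    qed
  qed (rule nf_acc)
qed

section \<open>Countable ordinals\<close>

lemma w0_le: "w0 \<le> (x::'w::wellorder)"
  unfolding w0_def by (rule Least_le) simp

definition seq_sup :: "(nat \<Rightarrow> 'w::wellorder) \<Rightarrow> 'w" where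
  "seq_sup f = (LEAST u. \<forall>n. f n \<le> u)"

lemma le_seq_sup: "bdd_above (range f) \<Longrightarrow> f n \<le> seq_sup f"
  unfolding seq_sup_def bdd_above_def by (rule LeastI2_ex) auto

lemma seq_sup_least: "\<forall>n. f n \<le> g \<Longrightarrow> seq_sup f \<le> g"
  unfolding seq_sup_def by (rule Least_le) blast

lemma less_seq_supD: "u < seq_sup f \<Longrightarrow> \<exists>n. u < f n"
  using seq_sup_least[of f u] by (meson not_le)

lemma seq_sup_eqI: "(\<And>n. f n \<le> b) \<Longrightarrow> (\<And>g. \<forall>n. f n \<le> g \<Longrightarrow> b \<le> g) \<Longrightarrow> seq_sup f = b"
  by (metis antisym bdd_aboveI2 le_seq_sup seq_sup_least)

lemma less_seq_sup: "strict_mono f \<Longrightarrow> bdd_above (range f) \<Longrightarrow> f n < seq_sup f"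
  by (meson le_seq_sup lessI order.strict_trans2 strict_mono_less)

lemma seq_sup_in_club:
  assumes "club X" "strict_mono f" "bdd_above (range f)" "\<And>n. f n \<in> X"
  shows "seq_sup f \<in> X"
proof -
  have "seq_sup f \<noteq> w0"
    using less_seq_sup[OF assms(2,3), of 0] w0_le[of "f 0"] by auto
  moreover have "\<exists>x\<in>X. g < x \<and> x < seq_sup f" if "g < seq_sup f" for g
    using less_seq_supD[OF that] assms(4) less_seq_sup[OF assms(2,3)] by blast
  ultimately show ?thesis using assms(1) unfolding club_def by blast
qed

lemma wlim_seq_sup:
  fixes f :: "nat \<Rightarrow> 'w::wellorder"
  assumes no_max: "\<And>y::'w. \<exists>z. y < z" and "strict_mono f" "bdd_above (range f)"
  shows "wlim (seq_sup f)"
proof -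
  have "seq_sup f \<noteq> w0"
    using less_seq_sup[OF assms(2,3), of 0] w0_le[of "f 0"] by auto
  moreover have "seq_sup f \<noteq> wsuc y" for y
  proof (cases "\<forall>n. f n \<le> y")
    case True
    then have "seq_sup f \<le> y" by (rule seq_sup_least)
    moreover have "y < wsuc y" unfolding wsuc_def using no_max[of y] by (rule LeastI_ex)
    ultimately show ?thesis by auto
  next
    case False
    then obtain n where "y < f n" by (auto simp: not_le)
    then have "wsuc y \<le> f n" unfolding wsuc_def by (rule Least_le)
    then show ?thesis using less_seq_sup[OF assms(2,3), of n] by auto
  qed
  ultimately show ?thesis unfolding wlim_def wis_succ_def by blast
qed

lemma w1_less_wlim:
  assumes "wlim b"
  shows "w1 < b"
proof -
  have "w1 \<le> b"
    unfolding w1_def wsuc_def using assms w0_le[of b] by (intro Least_le) (auto simp: wlim_def)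
  moreover have "w1 \<noteq> b"
    using assms unfolding w1_def wlim_def wis_succ_def by blast
  ultimately show ?thesis by simp
qed

lemma w0_less_w1: "wlim (b::'w::wellorder) \<Longrightarrow> w0 < (w1::'w)"
  unfolding w1_def wsuc_def by (rule LeastI_ex) (use w0_le[of b] in \<open>auto simp: wlim_def le_less\<close>)

lemma countable_strict_upper_bound:
  fixes B :: "'w::wellorder set"
  assumes "\<not> countable (UNIV :: 'w set)" and "\<forall>x::'w. countable {y. y < x}" and "countable B"
  shows "\<exists>u. \<forall>x\<in>B. x < u"
proof (rule ccontr)
  assume "\<not> ?thesis"
  then have "UNIV \<subseteq> (\<Union>x\<in>B. insert x {y. y < x})" by (auto simp: not_less le_less)
  moreover have "countable (\<Union>x\<in>B. insert x {y. y < x})"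
    using assms(2,3) by (intro countable_UN) auto
  ultimately show False using assms(1) countable_subset by blast
qed

section \<open>Normal forms\<close>

instance tm :: (countable) countable
  by countable_datatype

lemma Cset_finite: "finite (Cset x)"
  by (induction x) auto

lemma w0_in_Cset: "w0 \<in> Cset x"
  by (induction x) auto

lemma le_star: "y \<in> Cset x \<Longrightarrow> y \<le> star x"
  unfolding star_def using Cset_finite by (rule Max_ge)

lemma map_tm_inj:
  "Cset x \<subseteq> A \<Longrightarrow> Cset y \<subseteq> A \<Longrightarrow> inj_on f A \<Longrightarrow> map_tm f x = map_tm f y \<Longrightarrow> x = y"
proof (induction x arbitrary: y)
  case Z
  then show ?case by (cases y) auto
next
  case (Plus a b c)
  then show ?case by (cases y) (auto simp: inj_on_eq_iff)
qed

lemma countable_terms_over: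
  assumes "countable A"
  shows "countable {x. Cset x \<subseteq> A}"
proof -
  obtain f :: "_ \<Rightarrow> nat" where f: "inj_on f A" using assms by (rule countableE)
  have "inj_on (map_tm f) {x. Cset x \<subseteq> A}"
    using map_tm_inj[OF _ _ f] by (auto simp: inj_on_def)
  moreover have "countable (map_tm f ` {x. Cset x \<subseteq> A})"
    by (rule countable_subset[OF subset_UNIV]) simp
  ultimately show ?thesis using countable_image_inj_on by blast
qed

lemma addc_w0: "addc al w0 = al"
  by (induction al) (auto simp: mk_def)

lemma addc_not_Z: "b \<noteq> w0 \<Longrightarrow> addc al b \<noteq> Z"
  by (induction al) (auto simp: mk_def)

lemma nf_addc: "nf al \<Longrightarrow> omega_mult al \<Longrightarrow> nf (addc al b)"
proof (induction al)
  case Z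
  then show ?case by (auto simp: mk_def)
next
  case (Plus a b' c)
  show ?case
  proof (cases c)
    case Z
    then have "tless Z a" using Plus.prems by (cases a) auto
    then show ?thesis using Plus.prems Z by (auto simp: mk_def)
  next
    case (Plus a2 b2 c2)
    then show ?thesis using "Plus.IH"(2) "Plus.prems" by auto
  qed
qed

lemma tless_addc: "b1 < b2 \<Longrightarrow> tless (addc al b1) (addc al b2)"
proof (induction al)
  case Z
  then have "b2 \<noteq> w0" using w0_le[of b1] by auto
  then show ?case using Z by (auto simp: mk_def)
qed simp

lemma Cset_addc: "Cset (addc al b) = insert b (Cset al)"
  by (induction al) (auto simp: mk_def)

lemma star_addc: "star (addc al b) = max (star al) b"
  unfolding star_def Cset_addc using Cset_finite w0_in_Cset
  by (subst Max_insert) (auto simp: max.commute)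

lemma tless_addcD:
  "nf z \<Longrightarrow> tless z (addc al b) \<Longrightarrow> tless z al \<or> (\<exists>d<b. z = addc al d)"
proof (induction al arbitrary: z)
  case Z
  show ?case
  proof (cases z)
    case Z
    then show ?thesis
      using "Z.prems" w0_le[of b] by (auto simp: mk_def split: if_splits intro!: exI[of _ w0])
  next
    case (Plus a' b' c')
    then show ?thesis using "Z.prems" by (cases c') (auto simp: mk_def split: if_splits)
  qed
next
  case (Plus a b' c)
  show ?case
  proof (cases z)
    case (Plus a2 b2 c2)
    consider "tless a2 a" | "a2 = a" "b2 < b'" | "a2 = a" "b2 = b'" "tless c2 (addc c b)"
      using Plus "Plus.prems" by auto
    then show ?thesis
    proof cases
      case 3
      then have "tless c2 c \<or> (\<exists>d<b. c2 = addc c d)"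
        using "Plus.IH"(2) "Plus.prems" Plus by simp
      then show ?thesis using Plus 3 by auto
    qed (use Plus in auto)
  qed simp
qed

lemma tless_addc_cofinal:
  assumes "strict_mono bs" "seq_sup bs = be" "nf z" "tless z (addc al be)"
  shows "\<exists>m. \<forall>j\<ge>m. tless z (addc al (bs j))"
proof -
  have "\<exists>m. tless z (addc al (bs m))"
  proof -
    have "tless z al \<or> (\<exists>d<be. z = addc al d)" using assms(3,4) by (rule tless_addcD)
    then show ?thesis
    proof
      assume "tless z al"
      moreover have "w0 < bs 1"
        using w0_le[of "bs 0"] assms(1) by (meson order.strict_trans1 strict_mono_def zero_less_one)
      then have "tless al (addc al (bs 1))"
        using tless_addc addc_w0 by metis
      ultimately show ?thesis using tless_trans by blast
    next
      assume "\<exists>d<be. z = addc al d"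
      then show ?thesis using less_seq_supD assms(2) tless_addc by metis
    qed
  qed
  then obtain m where m: "tless z (addc al (bs m))" by blast
  have "tless z (addc al (bs j))" if "m \<le> j" for j
  proof (cases "m = j")
    case False
    then have "bs m < bs j" using assms(1) that by (simp add: strict_mono_less)
    then show ?thesis using m tless_trans tless_addc by blast
  qed (use m in simp)
  then show ?thesis by blast
qed

lemma tau_addc: "wlim b \<Longrightarrow> tau (addc al b) = Some b"
  by (induction al) (auto simp: mk_def wlim_def addc_not_Z)

lemma fs_addc: "wlim b \<Longrightarrow> fs (addc al b) w1 = addc al w1"
  by (induction al) (auto simp: mk_def wlim_def addc_not_Z Let_def)

lemma nf_OmN: "(w0::'w::wellorder) < w1 \<Longrightarrow> nf (OmN n :: 'w tm)"
  by (induction n) auto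

lemma star_OmN:
  assumes "(w0::'w::wellorder) < w1"
  shows "star (OmN n :: 'w tm) = w1"
proof -
  have "Cset (OmN n :: 'w tm) = {w0, w1}" by (induction n) auto
  then show ?thesis unfolding star_def using assms by (simp add: max_def less_imp_le)
qed

section \<open>The collapsing function Theta\<close>

definition Theta_closed :: "'w::wellorder set \<Rightarrow> 'w tm \<Rightarrow> 'w \<Rightarrow> bool" where
  "Theta_closed X x t \<longleftrightarrow> (\<forall>z. nf z \<and> tless z x \<and> star z < t \<longrightarrow> Theta X z < t)"

lemma Theta_eq:
  assumes "nf x"
  shows "Theta X x = (LEAST t. t \<in> X \<and> star x < t \<and> Theta_closed X x t)"
proof -
  have "Theta X x = ThetaF X (cut (Theta X) tlessR x) x"
    unfolding Theta_def by (rule wfrec[OF wf_tlessR])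
  also have "\<dots> = (LEAST t. t \<in> X \<and> star x < t \<and> Theta_closed X x t)"
    unfolding ThetaF_def Theta_closed_def
    by (rule arg_cong[where f = Least], rule ext) (auto simp: cut_apply tlessR_def assms)
  finally show ?thesis .
qed

lemma Theta_le:
  assumes "nf x" "t \<in> X" "star x < t" "Theta_closed X x t"
  shows "Theta X x \<le> t"
  unfolding Theta_eq[OF assms(1)] using assms(2-4) by (intro Least_le) blast

lemma less_Theta_eps_OmN:
  assumes "t < Theta_eps X"
  shows "\<exists>n. t < Theta X (OmN n)"
proof (rule ccontr)
  assume "\<not> ?thesis"
  then have "Theta_eps X \<le> t" unfolding Theta_eps_def by (intro Least_le) (auto simp: not_less)
  then show False using assms by simp
qed

lemma Theta_closed_attained:
  assumes "nf x" "t \<in> X" "t \<le> star x" "Theta_closed X x t"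
    and "nf g" "star g < t" "t \<le> Theta X g"
  shows "\<exists>\<gamma>. nf \<gamma> \<and> tless x \<gamma> \<and> Theta X \<gamma> = t"
proof -
  have "tless x g"
  proof -
    have "g \<noteq> x" using assms(3,6) by auto
    moreover have "\<not> tless g x" using assms(4-7) unfolding Theta_closed_def by (meson not_le)
    ultimately show ?thesis using tless_total by blast
  qed
  define S where "S = {y. nf y \<and> tless x y \<and> star y < t \<and> t \<le> Theta X y}"
  have "g \<in> S" using assms(5-7) \<open>tless x g\<close> by (simp add: S_def)
  then obtain \<gamma> where "\<gamma> \<in> S" and minimal: "\<And>y. (y, \<gamma>) \<in> tlessR \<Longrightarrow> y \<notin> S"
    using wfE_min[OF wf_tlessR] by metis
  have "Theta_closed X \<gamma> t"
    unfolding Theta_closed_def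
  proof (intro allI impI)
    fix z assume z: "nf z \<and> tless z \<gamma> \<and> star z < t"
    consider "tless z x" | "z = x" | "tless x z" using tless_total by blast
    then show "Theta X z < t"
    proof cases
      case 1
      then show ?thesis using assms(4) z unfolding Theta_closed_def by blast
    next
      case 2
      then show ?thesis using assms(3) z by (metis leD)
    next
      case 3
      have "(z, \<gamma>) \<in> tlessR" using z \<open>\<gamma> \<in> S\<close> by (simp add: tlessR_def S_def)
      then have "z \<notin> S" by (rule minimal)
      then show ?thesis using z 3 by (auto simp: S_def not_le)
    qed
  qed
  then have "Theta X \<gamma> \<le> t" using \<open>\<gamma> \<in> S\<close> assms(2) Theta_le by (auto simp: S_def)
  then show ?thesis using \<open>\<gamma> \<in> S\<close> by (auto simp: S_def)
qed

lemma addc_in_FIX: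
  fixes al :: "'w::wellorder tm"
  assumes "nf al" "omega_mult al" "wlim be" "star al < be" "be \<in> X"
    and "Theta_closed X (addc al be) be" "addc al be \<in> eps_hat X"
  shows "addc al be \<in> FIX X"
proof -
  have nfx: "nf (addc al be)" using assms(1,2) by (rule nf_addc)
  have starx: "star (addc al be) = be" using assms(4) by (simp add: star_addc)
  have w01: "(w0::'w) < w1" using assms(3) by (rule w0_less_w1)
  have w1be: "w1 < be" using assms(3) by (rule w1_less_wlim)
  obtain n where "be < Theta X (OmN n)"
    using less_Theta_eps_OmN assms(7) starx by (auto simp: eps_hat_def)
  then obtain \<gamma> where "nf \<gamma> \<and> tless (addc al be) \<gamma> \<and> Theta X \<gamma> = be"
    using Theta_closed_attained[OF nfx assms(5) _ assms(6) nf_OmN[OF w01], of n]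
      starx star_OmN[OF w01, of n] w1be by (auto intro: less_imp_le)
  moreover have "star (fs (addc al be) w1) < be"
    using assms(3,4) w1be by (simp add: fs_addc star_addc)
  ultimately show ?thesis
    using nfx starx assms(3) by (auto simp: FIX_def tau_addc)
qed

locale omega1_club =
  fixes X :: "'w::wellorder set"
  assumes uncountable: "\<not> countable (UNIV :: 'w set)"
    and countable_segments: "\<forall>x::'w. countable {y. y < x}"
    and club: "club X"
begin

lemma ex_greater: "\<exists>z. (y::'w) < z"
  using club unfolding club_def by (meson bexE)

lemma bdd_above_seq: "bdd_above (range (f :: nat \<Rightarrow> 'w))"
proof -
  have "countable (range f)" by simp
  then obtain u where "\<forall>x\<in>range f. x < u"
    using countable_strict_upper_bound[OF uncountable countable_segments] by blast
  then show ?thesis unfolding bdd_above_def by (blast intro: less_imp_le)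
qed

lemma closure_point: "\<exists>t\<in>X. s < t \<and> (\<forall>z. star z < t \<longrightarrow> f z < t)"
proof -
  have "\<exists>t\<in>X. u < t \<and> (\<forall>z. star z < u \<longrightarrow> f z < t)" for u
  proof -
    \<comment> \<open>only countably many terms have all coefficients below u\<close>
    have "countable (insert u (f ` {z. Cset z \<subseteq> {y. y < u}}))"
      using countable_terms_over countable_segments by blast
    then obtain v where v: "\<forall>x\<in>insert u (f ` {z. Cset z \<subseteq> {y. y < u}}). x < v"
      using countable_strict_upper_bound[OF uncountable countable_segments] by blast
    obtain t where "t \<in> X" "v < t" using club unfolding club_def by blast
    moreover have "f z < t" if "star z < u" for z
    proof -
      have "Cset z \<subseteq> {y. y < u}" using that le_star by fastforce
      then have "f z < v" using v by blast
      then show ?thesis using \<open>v < t\<close> by (rule order.strict_trans)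
    qed
    moreover have "u < t" using v \<open>v < t\<close> by auto
    ultimately show ?thesis by blast
  qed
  then obtain nx where nx: "\<And>u. nx u \<in> X \<and> u < nx u \<and> (\<forall>z. star z < u \<longrightarrow> f z < nx u)"
    by metis
  define sq where "sq k = (nx ^^ Suc k) s" for k
  have sq_Suc: "sq (Suc k) = nx (sq k)" for k by (simp add: sq_def)
  have mono: "strict_mono sq"
    unfolding strict_mono_Suc_iff by (simp add: sq_Suc nx)
  have "sq k \<in> X" for k
    unfolding sq_def using nx by simp
  then have "seq_sup sq \<in> X"
    by (rule seq_sup_in_club[OF club mono bdd_above_seq])
  moreover have "s < seq_sup sq"
  proof -
    have "s < sq 0" unfolding sq_def using nx by simp
    then show ?thesis using less_seq_sup[OF mono bdd_above_seq] by (rule order.strict_trans)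
  qed
  moreover have "f z < seq_sup sq" if z: "star z < seq_sup sq" for z
  proof -
    obtain k where "star z < sq k" using less_seq_supD[OF z] by blast
    then have "f z < sq (Suc k)" using nx sq_Suc by simp
    then show ?thesis using less_seq_sup[OF mono bdd_above_seq] order.strict_trans by blast
  qed
  ultimately show ?thesis by blast
qed

lemma Theta_spec:
  assumes "nf x"
  shows "Theta X x \<in> X \<and> star x < Theta X x \<and> Theta_closed X x (Theta X x)"
proof -
  obtain t where "t \<in> X \<and> star x < t \<and> (\<forall>z. star z < t \<longrightarrow> Theta X z < t)"
    using closure_point by blast
  then have "\<exists>t. t \<in> X \<and> star x < t \<and> Theta_closed X x t"
    unfolding Theta_closed_def by blast
  from LeastI_ex[OF this] show ?thesis unfolding Theta_eq[OF assms, symmetric] .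
qed

lemma Theta_in_X: "nf x \<Longrightarrow> Theta X x \<in> X"
  using Theta_spec by blast

lemma star_less_Theta: "nf x \<Longrightarrow> star x < Theta X x"
  using Theta_spec by blast

lemma Theta_closed_Theta: "nf x \<Longrightarrow> Theta_closed X x (Theta X x)"
  using Theta_spec by blast

lemma Theta_less_Theta:
  assumes "nf x" "nf z" "tless z x" "star z \<le> star x"
  shows "Theta X z < Theta X x"
  using Theta_closed_Theta[OF assms(1)] star_less_Theta[OF assms(1)] assms(2-4)
  unfolding Theta_closed_def by (meson order.strict_trans1)

lemma Theta_addc_less:
  assumes "nf al" "omega_mult al" "b < b'"
  shows "Theta X (addc al b) < Theta X (addc al b')"
  using assms by (intro Theta_less_Theta) (auto simp: nf_addc tless_addc star_addc le_max_iff_disj)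

lemma strict_mono_Theta_addc:
  "nf al \<Longrightarrow> omega_mult al \<Longrightarrow> strict_mono bs \<Longrightarrow> strict_mono (\<lambda>n. Theta X (addc al (bs n)))"
  by (simp add: strict_mono_def Theta_addc_less)

lemma seq_sup_Theta_addc_in_X:
  assumes "nf al" "omega_mult al" "strict_mono bs"
  shows "seq_sup (\<lambda>n. Theta X (addc al (bs n))) \<in> X"
  using club strict_mono_Theta_addc[OF assms] bdd_above_seq
  by (rule seq_sup_in_club) (simp add: Theta_in_X nf_addc assms(1,2))

lemma Theta_closed_seq_sup:
  assumes "nf al" "omega_mult al" "strict_mono bs" "seq_sup bs = be"
  shows "Theta_closed X (addc al be) (seq_sup (\<lambda>n. Theta X (addc al (bs n))))"
  unfolding Theta_closed_def
proof (intro allI impI)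
  define T where "T n = Theta X (addc al (bs n))" for n
  have mono: "strict_mono T"
    unfolding T_def using assms(1-3) by (rule strict_mono_Theta_addc)
  fix z
  assume z: "nf z \<and> tless z (addc al be) \<and> star z < seq_sup (\<lambda>n. Theta X (addc al (bs n)))"
  obtain m where m: "\<forall>j\<ge>m. tless z (addc al (bs j))"
    using tless_addc_cofinal[OF assms(3,4)] z by blast
  obtain k where k: "star z < T k" using z less_seq_supD unfolding T_def by blast
  define j where "j = max m k"
  have "tless z (addc al (bs j))" using m by (simp add: j_def)
  moreover have "star z < T j"
    using k mono by (metis j_def max.cobounded2 order.strict_trans2 strict_mono_less_eq)
  ultimately have "Theta X z < T j"
    using Theta_closed_Theta[OF nf_addc[OF assms(1,2)]] z unfolding T_def Theta_closed_def by blast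
  also have "\<dots> < seq_sup T" using mono bdd_above_seq by (rule less_seq_sup)
  finally show "Theta X z < seq_sup (\<lambda>n. Theta X (addc al (bs n)))" unfolding T_def .
qed

lemma star_addc_less_seq_sup:
  assumes "nf al" "omega_mult al" "strict_mono bs" "seq_sup bs = be"
    and "addc al be \<in> eps_hat X" "addc al be \<notin> FIX X"
  shows "star (addc al be) < seq_sup (\<lambda>n. Theta X (addc al (bs n)))"
proof -
  define T where "T n = Theta X (addc al (bs n))" for n
  have mono: "strict_mono T"
    unfolding T_def using assms(1-3) by (rule strict_mono_Theta_addc)
  have star_less_T: "max (star al) (bs n) < T n" for n
    using star_less_Theta[OF nf_addc[OF assms(1,2)]] unfolding T_def star_addc .
  have T_less: "T n < seq_sup T" for n using mono bdd_above_seq by (rule less_seq_sup)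
  have al_less: "star al < seq_sup T"
    using star_less_T[of 0] T_less[of 0] by (meson max.strict_boundedE order.strict_trans)
  have "be \<le> seq_sup T"
    unfolding assms(4)[symmetric] using star_less_T T_less
    by (intro seq_sup_least) (meson max.strict_boundedE less_imp_le order.strict_trans)
  moreover have "be \<noteq> seq_sup T"
  proof
    assume be: "be = seq_sup T"
    have "wlim be" using wlim_seq_sup[OF ex_greater assms(3) bdd_above_seq] assms(4) by simp
    moreover have "be \<in> X"
      unfolding be T_def using assms(1-3) by (rule seq_sup_Theta_addc_in_X)
    moreover have "Theta_closed X (addc al be) be"
      using Theta_closed_seq_sup[OF assms(1-4)] unfolding be T_def .
    ultimately have "addc al be \<in> FIX X"
      using addc_in_FIX assms(1,2,5) al_less be by blast
    then show False using assms(6) by contradiction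
  qed
  ultimately show ?thesis using al_less unfolding T_def by (simp add: star_addc)
qed

end

theorem lemma4p3:
  fixes X :: "'w::wellorder set" and al :: "'w tm" and be :: 'w and bs :: "nat \<Rightarrow> 'w"
  assumes "\<not> countable (UNIV :: 'w set)"
    and "\<forall>x::'w. countable {y. y < x}"
    and "club X" and "w0 \<notin> X"
    and "nf al" and "omega_mult al"
    and "addc al be \<in> eps_hat X"
    and "tlim (addc al be)"
    and "addc al be \<notin> FIX X"
    and "strict_mono bs"
    and "\<forall>n. bs n \<le> be" and "\<forall>g. (\<forall>n. bs n \<le> g) \<longrightarrow> be \<le> g"
  shows "strict_mono (\<lambda>n. Theta X (addc al (bs n)))
       \<and> (\<forall>n. Theta X (addc al (bs n)) \<le> Theta X (addc al be))
       \<and> (\<forall>g. (\<forall>n. Theta X (addc al (bs n)) \<le> g) \<longrightarrow> Theta X (addc al be) \<le> g)"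
proof -
  interpret omega1_club X using assms(1-3) by unfold_locales
  define T where "T n = Theta X (addc al (bs n))" for n
  have be: "seq_sup bs = be" using assms(11,12) by (intro seq_sup_eqI) auto
  have mono: "strict_mono T"
    unfolding T_def using assms(5,6,10) by (rule strict_mono_Theta_addc)
  have "T n < Theta X (addc al be)" for n
    unfolding T_def using assms(5,6) less_seq_sup[OF assms(10) bdd_above_seq, of n] be
    by (simp add: Theta_addc_less)
  moreover have "Theta X (addc al be) \<le> g" if "\<forall>n. T n \<le> g" for g
  proof -
    have "Theta X (addc al be) \<le> seq_sup T"
      using nf_addc[OF assms(5,6)] seq_sup_Theta_addc_in_X[OF assms(5,6,10)]
        star_addc_less_seq_sup[OF assms(5,6,10) be assms(7,9)] Theta_closed_seq_sup[OF assms(5,6,10) be]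
      unfolding T_def by (rule Theta_le)
    also have "\<dots> \<le> g" using that by (rule seq_sup_least)
    finally show ?thesis .
  qed
  ultimately show ?thesis using mono unfolding T_def by (auto intro: less_imp_le)
qed

end
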